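(* Let $k\geq 1$ and $n\geq 2$ be integers, let $\Omega>0$ and $0<\sigma\leq m_{\min}$. Then there exist a positive discrete measure $\mu=\sum_{j=1}^{n}a_j\delta_{\mathbf y_j}$ on $\mathbb R^k$ with $n$ distinct supports $\mathbf y_j\in\mathbb R^k$ and amplitudes $a_j>0$, and a positive discrete measure $\hat \mu=\sum_{j=1}^{n-1}\hat a_j \delta_{\hat{\mathbf y}_j}$ on $\mathbb R^k$ with $n-1$ supports and amplitudes $\hat a_j>0$, such that \[ \max_{\boldsymbol\omega\in\mathbb R^k,\ \|\boldsymbol\omega\|_2\leq\Omega}\big|\mathcal F[\hat \mu](\boldsymbol\omega)-\mathcal F [\mu](\boldsymbol\omega)\big|< \sigma, \] and moreover \[ \min_{1\leq j\leq n}|a_j|= m_{\min}, \qquad \min_{p\neq j}\|\mathbf y_p-\mathbf y_j\|_2= \frac{2e^{-1}}{\Omega}\Big(\frac{\sigma}{m_{\min}}\Big)^{\frac{1}{2n-2}}. \]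
   Context: For a discrete measure $\nu=\sum_{j} c_j\delta_{\mathbf x_j}$ on $\mathbb R^k$, its Fourier transform is $\mathcal F[\nu](\boldsymbol\omega)=\sum_j c_j e^{i \mathbf x_j\cdot\boldsymbol\omega}$, $\boldsymbol\omega\in\mathbb R^k$. Here $\Omega>0$ is the cutoff frequency, $\sigma>0$ the noise level and $m_{\min}>0$ a prescribed minimal amplitude. *)

theory Defs
  imports "HOL-Analysis.Analysis"
begin

definition fourier_discrete :: "nat set \<Rightarrow> (nat \<Rightarrow> real) \<Rightarrow> (nat \<Rightarrow> real^'k) \<Rightarrow> real^'k \<Rightarrow> complex" where
  "fourier_discrete J c x \<omega> = (\<Sum>j\<in>J. complex_of_real (c j) * exp (\<i> * complex_of_real (x j \<bullet> \<omega>)))"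

end

theory Submission
  imports Defs
begin

text \<open>Put the weights \<open>m * (2M choose l)\<close> at the equispaced points \<open>l * h * e\<close>, \<open>l \<le> 2M\<close>, on a
  line with unit direction \<open>e\<close>, and split them by parity of \<open>l\<close>: the even ones form \<open>\<mu>\<close>
  (\<open>M + 1\<close> atoms, separation \<open>2h\<close>, smallest weight \<open>m\<close>), the odd ones form \<open>\<mu>\<close>-hat (\<open>M\<close> atoms).
  By the binomial theorem \<open>\<F>[\<mu>-hat] - \<F>[\<mu>] = -m (1 - exp (i h e\<bullet>\<omega>))^(2M)\<close>, whose modulus is at
  most \<open>m (h \<Omega>)^(2M)\<close> for \<open>|\<omega>| \<le> \<Omega>\<close>. The choice \<open>h = e\<^sup>-\<^sup>1 \<Omega>\<^sup>-\<^sup>1 (\<sigma>/m)^(1/(2M))\<close> makes this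
  \<open>e^(-2M) \<sigma> < \<sigma>\<close>.\<close>

definition line_grid :: "real \<Rightarrow> 'a::real_vector \<Rightarrow> nat \<Rightarrow> 'a" where
  "line_grid h e l = (real l * h) *\<^sub>R e"

definition binomial_weight :: "real \<Rightarrow> nat \<Rightarrow> nat \<Rightarrow> real" where
  "binomial_weight m N l = m * real (N choose l)"

lemma norm_one_minus_exp_ii_le: "cmod (1 - exp (\<i> * complex_of_real t)) \<le> \<bar>t\<bar>"
  using dist_exp_i_1[of t] abs_sin_x_le_abs_x[of "t / 2"] by (simp add: norm_minus_commute)

lemma sum_atMost_double_even_odd:
  fixes f :: "nat \<Rightarrow> 'a::comm_monoid_add"
  shows "(\<Sum>l\<le>2*M. f l) = (\<Sum>j\<le>M. f (2*j)) + (\<Sum>j<M. f (2*j+1))"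
proof (induction M)
  case 0
  then show ?case by simp
next
  case (Suc M)
  have "{..2 * Suc M} = insert (Suc (Suc (2*M))) (insert (Suc (2*M)) {..2*M})" by auto
  then have "(\<Sum>l\<le>2 * Suc M. f l) = f (Suc (Suc (2*M))) + f (Suc (2*M)) + (\<Sum>l\<le>2*M. f l)"
    by (simp add: add.assoc)
  then show ?case using Suc by (simp add: algebra_simps)
qed

lemma line_grid_double: "line_grid h e (2 * j) = line_grid (2 * h) e j"
  by (simp add: line_grid_def)

lemma dist_line_grid:
  fixes e :: "'a::real_normed_vector"
  assumes "norm e = 1"
  shows "dist (line_grid d e p) (line_grid d e j) = \<bar>d\<bar> * \<bar>real p - real j\<bar>"
proof -
  have "line_grid d e p - line_grid d e j = (d * (real p - real j)) *\<^sub>R e"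
    by (simp add: line_grid_def algebra_simps)
  then show ?thesis using assms by (simp add: dist_norm abs_mult)
qed

lemma inj_line_grid:
  fixes e :: "'a::real_normed_vector"
  assumes "norm e = 1" and "d \<noteq> 0"
  shows "inj (line_grid d e)"
proof (rule injI)
  fix p j
  assume "line_grid d e p = line_grid d e j"
  then have "\<bar>d\<bar> * \<bar>real p - real j\<bar> = 0" by (metis assms(1) dist_line_grid dist_self)
  then show "p = j" using assms(2) by simp
qed

lemma Min_dist_line_grid:
  fixes e :: "'a::real_normed_vector"
  assumes "norm e = 1" and "n \<ge> 2"
  shows "Min ((\<lambda>(p, j). dist (line_grid d e p) (line_grid d e j)) ` {(p, j). p < n \<and> j < n \<and> p \<noteq> j})
    = \<bar>d\<bar>"
proof (rule Min_eqI)
  have "{(p, j). p < n \<and> j < n \<and> p \<noteq> j} \<subseteq> {..<n} \<times> {..<n}" by auto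
  then show "finite ((\<lambda>(p, j). dist (line_grid d e p) (line_grid d e j)) `
      {(p, j). p < n \<and> j < n \<and> p \<noteq> j})"
    by (meson finite_SigmaI finite_imageI finite_lessThan finite_subset)
  show "\<bar>d\<bar> \<in> (\<lambda>(p, j). dist (line_grid d e p) (line_grid d e j)) ` {(p, j). p < n \<and> j < n \<and> p \<noteq> j}"
    using assms by (intro image_eqI[where x = "(0, 1)"]) (auto simp: dist_line_grid)
next
  fix x
  assume "x \<in> (\<lambda>(p, j). dist (line_grid d e p) (line_grid d e j)) ` {(p, j). p < n \<and> j < n \<and> p \<noteq> j}"
  then obtain p j where "p \<noteq> j" and x: "x = dist (line_grid d e p) (line_grid d e j)" by auto
  then have "\<bar>real p - real j\<bar> \<ge> 1" by (cases "p < j") auto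
  then show "\<bar>d\<bar> \<le> x" using x assms(1) by (simp add: dist_line_grid mult_le_cancel_left1)
qed

lemma Min_binomial_weight_even:
  assumes "m \<ge> 0"
  shows "Min ((\<lambda>j. \<bar>binomial_weight m (2*M) (2*j)\<bar>) ` {..<Suc M}) = m"
proof (rule Min_eqI)
  show "m \<in> (\<lambda>j. \<bar>binomial_weight m (2*M) (2*j)\<bar>) ` {..<Suc M}"
    using assms by (intro image_eqI[where x = 0]) (auto simp: binomial_weight_def)
next
  fix x
  assume "x \<in> (\<lambda>j. \<bar>binomial_weight m (2*M) (2*j)\<bar>) ` {..<Suc M}"
  then obtain j where "j < Suc M" and x: "x = \<bar>binomial_weight m (2*M) (2*j)\<bar>" by auto
  then have "real (2*M choose (2*j)) \<ge> 1" by (simp add: Suc_le_eq zero_less_binomial)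
  then show "m \<le> x"
    using x assms mult_left_mono[of 1 "real (2*M choose (2*j))" m] by (simp add: binomial_weight_def)
qed simp

lemma fourier_discrete_line_grid:
  "fourier_discrete J c (\<lambda>j. line_grid h e (f j)) \<omega>
    = (\<Sum>j\<in>J. complex_of_real (c j) * exp (\<i> * complex_of_real (h * (e \<bullet> \<omega>))) ^ f j)"
  unfolding fourier_discrete_def line_grid_def
  by (simp add: exp_of_nat_mult[symmetric] algebra_simps)

lemma fourier_binomial_difference:
  "fourier_discrete {..<M} (\<lambda>j. binomial_weight m (2*M) (2*j+1)) (\<lambda>j. line_grid h e (2*j+1)) \<omega>
   - fourier_discrete {..<Suc M} (\<lambda>j. binomial_weight m (2*M) (2*j)) (\<lambda>j. line_grid h e (2*j)) \<omega>
   = - complex_of_real m * (1 - exp (\<i> * complex_of_real (h * (e \<bullet> \<omega>)))) ^ (2*M)"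
proof -
  define z where "z = exp (\<i> * complex_of_real (h * (e \<bullet> \<omega>)))"
  define g where "g l = of_nat ((2*M) choose l) * (-z) ^ l" for l
  have "(1 - z) ^ (2*M) = (\<Sum>l\<le>2*M. g l)"
    using binomial_ring[of "-z" 1 "2*M"] by (simp add: g_def)
  also have "\<dots> = (\<Sum>j\<le>M. g (2*j)) + (\<Sum>j<M. g (2*j+1))"
    by (rule sum_atMost_double_even_odd)
  finally have binomial: "(1 - z) ^ (2*M) = (\<Sum>j\<le>M. g (2*j)) + (\<Sum>j<M. g (2*j+1))" .
  have "fourier_discrete {..<Suc M} (\<lambda>j. binomial_weight m (2*M) (2*j)) (\<lambda>j. line_grid h e (2*j)) \<omega>
      = complex_of_real m * (\<Sum>j\<le>M. g (2*j))"
    unfolding fourier_discrete_line_grid z_def[symmetric] lessThan_Suc_atMost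
    by (simp add: g_def binomial_weight_def sum_distrib_left mult_ac)
  moreover have "fourier_discrete {..<M} (\<lambda>j. binomial_weight m (2*M) (2*j+1)) (\<lambda>j. line_grid h e (2*j+1)) \<omega>
      = - complex_of_real m * (\<Sum>j<M. g (2*j+1))"
    unfolding fourier_discrete_line_grid z_def[symmetric]
    by (simp add: g_def binomial_weight_def sum_distrib_left sum_negf mult_ac)
  ultimately show ?thesis
    unfolding z_def[symmetric] binomial by (simp add: algebra_simps)
qed

lemma norm_fourier_binomial_difference_le:
  assumes "norm e = 1" and "norm \<omega> \<le> \<Omega>" and "m \<ge> 0" and "h \<ge> 0"
  shows "cmod (fourier_discrete {..<M} (\<lambda>j. binomial_weight m (2*M) (2*j+1)) (\<lambda>j. line_grid h e (2*j+1)) \<omega>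
     - fourier_discrete {..<Suc M} (\<lambda>j. binomial_weight m (2*M) (2*j)) (\<lambda>j. line_grid h e (2*j)) \<omega>)
    \<le> m * (h * \<Omega>) ^ (2*M)"
proof -
  have "\<bar>h * (e \<bullet> \<omega>)\<bar> \<le> h * \<Omega>"
    using Cauchy_Schwarz_ineq2[of e \<omega>] assms by (simp add: abs_mult mult_left_mono)
  then have "cmod (1 - exp (\<i> * complex_of_real (h * (e \<bullet> \<omega>)))) \<le> h * \<Omega>"
    using norm_one_minus_exp_ii_le order_trans by blast
  then show ?thesis
    unfolding fourier_binomial_difference
    using assms(3) by (simp add: norm_mult norm_power mult_left_mono power_mono)
qed

lemma power_exp_neg_one_mult_root:
  assumes "t > 0" and "N > 0"
  shows "(exp (-1) * t powr (1 / real N)) ^ N = exp (- real N) * t"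
  using assms by (simp add: power_mult_distrib powr_realpow[symmetric] powr_powr
      exp_of_nat_mult[symmetric])

theorem theorem3p2:
  fixes n :: nat and \<Omega> \<sigma> m_min :: real
  assumes "n \<ge> 2" and "\<Omega> > 0" and "0 < \<sigma>" and "\<sigma> \<le> m_min"
  shows "\<exists>(a :: nat \<Rightarrow> real) (y :: nat \<Rightarrow> real^'k) (ah :: nat \<Rightarrow> real) (yh :: nat \<Rightarrow> real^'k).
           inj_on y {..<n} \<and> (\<forall>j<n. a j > 0) \<and> (\<forall>j<n - 1. ah j > 0) \<and>
           ((SUP \<omega>\<in>cball 0 \<Omega>. cmod (fourier_discrete {..<n - 1} ah yh \<omega> - fourier_discrete {..<n} a y \<omega>)) < \<sigma>) \<and>
           Min ((\<lambda>j. \<bar>a j\<bar>) ` {..<n}) = m_min \<and>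
           Min ((\<lambda>(p, j). dist (y p) (y j)) ` {(p, j). p < n \<and> j < n \<and> p \<noteq> j})
             = 2 * exp (-1) / \<Omega> * (\<sigma> / m_min) powr (1 / (2 * real n - 2))"
proof -
  define M where "M = n - 1"
  have n: "n = Suc M" "M \<ge> 1" using assms(1) by (auto simp: M_def)
  define h where "h = exp (-1) / \<Omega> * (\<sigma> / m_min) powr (1 / real (2*M))"
  have "h > 0" using assms by (simp add: h_def)
  define e :: "real^'k" where "e = axis undefined 1"
  have e: "norm e = 1" by (simp add: e_def)
  have "m_min * (h * \<Omega>) ^ (2*M) = exp (- real (2*M)) * \<sigma>"
    using assms n power_exp_neg_one_mult_root[of "\<sigma> / m_min" "2*M"] by (simp add: h_def)
  also have "\<dots> < \<sigma>" using assms(3) n(2) by simp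
  finally have "(SUP \<omega>\<in>cball 0 \<Omega>. cmod
      (fourier_discrete {..<M} (\<lambda>j. binomial_weight m_min (2*M) (2*j+1)) (\<lambda>j. line_grid h e (2*j+1)) \<omega>
       - fourier_discrete {..<Suc M} (\<lambda>j. binomial_weight m_min (2*M) (2*j)) (line_grid (2*h) e) \<omega>)) < \<sigma>"
    using assms \<open>h > 0\<close> e norm_fourier_binomial_difference_le[of e _ \<Omega> m_min h M]
    by (intro le_less_trans[OF cSUP_least]) (auto simp: line_grid_double)
  moreover have "inj_on (line_grid (2*h) e) {..<n}"
    using inj_line_grid[OF e, of "2*h"] \<open>h > 0\<close> by (simp add: inj_on_subset[OF _ subset_UNIV])
  moreover have "real (2*M) = 2 * real n - 2" using n by simp
  ultimately show ?thesis
    using assms n \<open>h > 0\<close> e Min_binomial_weight_even[of m_min M] Min_dist_line_grid[OF e assms(1)]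
    by (intro exI[of _ "\<lambda>j. binomial_weight m_min (2*M) (2*j)"] exI[of _ "line_grid (2*h) e"]
        exI[of _ "\<lambda>j. binomial_weight m_min (2*M) (2*j+1)"] exI[of _ "\<lambda>j. line_grid h e (2*j+1)"])
      (auto simp: binomial_weight_def h_def zero_less_binomial)
qed

end
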